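(* Let $0<\lambda<1$, let $F$ be a distribution function with $F(x)=0$ for $x<0$, let $X$ be a random variable with distribution function $F$, and let $\phi(t)=\int_0^\infty e^{-tx}\,dF(x)$, $t\ge 0$, be its Laplace transform. Then $m_{1+\lambda}:=E[X^{1+\lambda}]=\int_0^\infty x^{1+\lambda}\,dF(x)$ is finite if and only if the right derivative $\phi'(0+)$ exists (finite) and the fractional derivative $$\Big[\frac{d^{1+\lambda}}{dt^{1+\lambda}}\phi(t)\Big|_{t=0+}\Big]:=\frac{\lambda}{\Gamma(1-\lambda)}\int_0^\infty \frac{\phi'(u)-\phi'(0+)}{u^{1+\lambda}}\,du$$ exists (is finite). In that case $$m_{1+\lambda}=\frac{\lambda}{\Gamma(1-\lambda)}\int_0^\infty \frac{\phi'(u)-\phi'(0+)}{u^{1+\lambda}}\,du.$$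
   Context: $\Gamma$ denotes the Gamma function. For $t\ge0$ the fractional derivative of order $1+\lambda$ of $\phi$ is defined as $\frac{\lambda}{\Gamma(1-\lambda)}\int_t^\infty \frac{\phi'(u)-\phi'(t)}{(u-t)^{1+\lambda}}\,du$. *)

theory Defs
  imports "HOL-Probability.Probability"
begin

definition laplace_tr :: "real measure \<Rightarrow> real \<Rightarrow> real" where
  "laplace_tr M t = (\<integral>x. exp (- t * x) \<partial>M)"

end

theory Submission
  imports Defs
begin

text \<open>
  For \<open>X \<ge> 0\<close> with finite mean, \<open>\<phi>'(u) - \<phi>'(0+) = E[X (1 - exp (-u X))]\<close>, so by Tonelli the
  fractional integral is \<open>E[\<integral>\<^sub>0\<^sup>\<infinity> X (1 - exp (-u X)) / u powr (1 + \<lambda>) du]\<close>. The substitution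
  \<open>v = u X\<close> turns the inner integral into \<open>X powr (1 + \<lambda>)\<close> times
  \<open>\<integral>\<^sub>0\<^sup>\<infinity> (1 - exp (-v)) / v powr (1 + \<lambda>) dv\<close>, and writing \<open>1 - exp (-v) = \<integral>\<^sub>0\<^sup>v exp (-s) ds\<close>
  and applying Tonelli once more identifies this constant as \<open>\<Gamma>(1 - \<lambda>) / \<lambda>\<close>. Conversely, a
  finite right derivative of \<open>\<phi>\<close> at \<open>0\<close> forces a finite mean by Fatou's lemma, so both
  sides of the equivalence put us in this situation.
\<close>

lemma nn_integral_exp_minus_atLeastAtMost:
  fixes v :: real
  assumes "0 \<le> v"
  shows "(\<integral>\<^sup>+s. ennreal (indicator {0..v} s * exp (- s)) \<partial>lborel) = ennreal (1 - exp (- v))"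
proof -
  have "((\<lambda>s. exp (- s)) has_integral (- exp (- v) - (- exp (- 0)))) {0..v}"
    using assms
    by (intro fundamental_theorem_of_calculus)
       (auto intro!: derivative_eq_intros simp flip: has_real_derivative_iff_has_vector_derivative)
  then have "((\<lambda>s. exp (- s)) has_integral (1 - exp (- v))) {0..v}"
    by simp
  from nn_integral_has_integral_lebesgue[OF _ this] show ?thesis
    by simp
qed

lemma nn_integral_powr_atLeast:
  fixes s a :: real
  assumes "0 < s" "0 < a"
  shows "(\<integral>\<^sup>+v. ennreal (indicator {s..} v * v powr (- (1 + a))) \<partial>lborel) = ennreal (s powr (- a) / a)"
proof -
  have "((\<lambda>v. v powr (- (1 + a))) has_integral - (s powr (- (1 + a) + 1)) / (- (1 + a) + 1)) {s..}"
    using assms by (intro has_integral_powr_to_inf) auto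
  then have "((\<lambda>v. v powr (- (1 + a))) has_integral (s powr (- a) / a)) {s..}"
    by simp
  from nn_integral_has_integral_lebesgue[OF _ this] show ?thesis
    by simp
qed

lemma nn_integral_one_minus_exp_div_powr:
  fixes lam :: real
  assumes lam: "0 < lam" "lam < 1"
  shows "(\<integral>\<^sup>+v. ennreal (indicator {0<..} v * ((1 - exp (- v)) / v powr (1 + lam))) \<partial>lborel)
          = ennreal (Gamma (1 - lam) / lam)"
proof -
  define H where "H v s = ennreal (indicator {0<..} v * v powr (- (1 + lam)) * (indicator {0..v} s * exp (- s)))"
    for v s :: real
  have H_measurable: "case_prod H \<in> borel_measurable (lborel \<Otimes>\<^sub>M lborel)"
  proof -
    have "case_prod H = (\<lambda>x. ennreal ((if 0 < fst x then 1 else 0) * fst x powr (- (1 + lam)) *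
            ((if 0 \<le> snd x \<and> snd x \<le> fst x then 1 else 0) * exp (- snd x))))"
      unfolding H_def by (auto simp: fun_eq_iff indicator_def)
    also have "\<dots> \<in> borel_measurable (lborel \<Otimes>\<^sub>M lborel)"
      by measurable
    finally show ?thesis .
  qed
  have inner_s: "ennreal (indicator {0<..} v * ((1 - exp (- v)) / v powr (1 + lam))) = (\<integral>\<^sup>+s. H v s \<partial>lborel)"
    for v
  proof (cases "0 < v")
    case True
    have "(\<integral>\<^sup>+s. H v s \<partial>lborel)
        = (\<integral>\<^sup>+s. ennreal (v powr (- (1 + lam))) * ennreal (indicator {0..v} s * exp (- s)) \<partial>lborel)"
      unfolding H_def using True by (intro nn_integral_cong) (simp add: ennreal_mult')
    also have "\<dots> = ennreal (v powr (- (1 + lam))) * ennreal (1 - exp (- v))"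
      using True by (subst nn_integral_cmult) (auto simp: nn_integral_exp_minus_atLeastAtMost)
    also have "\<dots> = ennreal (indicator {0<..} v * ((1 - exp (- v)) / v powr (1 + lam)))"
      using True unfolding powr_minus_divide by (simp add: ennreal_mult'[symmetric])
    finally show ?thesis
      by simp
  qed (simp add: H_def)
  have inner_v: "(\<integral>\<^sup>+v. H v s \<partial>lborel) = ennreal (indicator {0<..} s * s powr (- lam) / exp s / lam)"
    if "s \<noteq> 0" for s
  proof (cases "0 < s")
    case True
    have "(\<integral>\<^sup>+v. H v s \<partial>lborel)
        = (\<integral>\<^sup>+v. ennreal (exp (- s)) * ennreal (indicator {s..} v * v powr (- (1 + lam))) \<partial>lborel)"
      unfolding H_def using True
      by (intro nn_integral_cong) (auto simp: ennreal_mult'[symmetric] indicator_def)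
    also have "\<dots> = ennreal (exp (- s)) * ennreal (s powr (- lam) / lam)"
      using True lam
      by (subst nn_integral_cmult) (auto simp del: minus_add_distrib simp: nn_integral_powr_atLeast)
    also have "\<dots> = ennreal (indicator {0<..} s * s powr (- lam) / exp s / lam)"
      using True lam by (simp add: ennreal_mult'[symmetric] exp_minus field_simps)
    finally show ?thesis .
  next
    case False
    with that show ?thesis
      by (simp add: H_def indicator_def)
  qed
  have "(\<integral>\<^sup>+v. ennreal (indicator {0<..} v * ((1 - exp (- v)) / v powr (1 + lam))) \<partial>lborel)
        = (\<integral>\<^sup>+v. \<integral>\<^sup>+s. H v s \<partial>lborel \<partial>lborel)"
    by (intro nn_integral_cong inner_s)
  also have "\<dots> = (\<integral>\<^sup>+s. \<integral>\<^sup>+v. H v s \<partial>lborel \<partial>lborel)"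
    using lborel_pair.Fubini'[OF H_measurable] by simp
  also have "\<dots> = (\<integral>\<^sup>+s. ennreal (indicator {0<..} s * s powr (- lam) / exp s / lam) \<partial>lborel)"
    using AE_lborel_singleton[of 0]
    by (intro nn_integral_cong_AE) (auto elim!: eventually_mono simp: inner_v)
  also have "\<dots> = (\<integral>\<^sup>+s. ennreal (1 / lam) * ennreal (indicator {0..} s * s powr ((1 - lam) - 1) / exp s) \<partial>lborel)"
    using lam by (intro nn_integral_cong) (auto simp: ennreal_mult'[symmetric] indicator_def)
  also have "\<dots> = ennreal (1 / lam) * ennreal (Gamma (1 - lam))"
    using lam by (subst nn_integral_cmult) (auto simp: Gamma_conv_nn_integral_real)
  also have "\<dots> = ennreal (Gamma (1 - lam) / lam)"
    using lam by (simp add: ennreal_mult'[symmetric])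
  finally show ?thesis .
qed

lemma nn_integral_scaled_one_minus_exp_div_powr:
  fixes lam x :: real
  assumes lam: "0 < lam" "lam < 1" and "0 \<le> x"
  shows "(\<integral>\<^sup>+u. ennreal (indicator {0<..} u * (x * (1 - exp (- u * x)) / u powr (1 + lam))) \<partial>lborel)
          = ennreal (x powr (1 + lam)) * ennreal (Gamma (1 - lam) / lam)"
proof (cases "x = 0")
  case False
  with \<open>0 \<le> x\<close> have x: "0 < x"
    by simp
  define f where "f u = ennreal (indicator {0<..} u * (x * (1 - exp (- u * x)) / u powr (1 + lam)))" for u
  have substitute: "f (0 + 1 / x * v) = ennreal (x * x powr (1 + lam)) *
      ennreal (indicator {0<..} v * ((1 - exp (- v)) / v powr (1 + lam)))" for v
  proof (cases "0 < v")
    case True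
    then have "(v / x) powr (1 + lam) = v powr (1 + lam) / x powr (1 + lam)"
      using x by (simp add: powr_divide)
    with True x show ?thesis
      unfolding f_def by (simp add: ennreal_mult'[symmetric] field_simps)
  qed (use x in \<open>simp add: f_def indicator_def field_simps\<close>)
  have "(\<integral>\<^sup>+u. f u \<partial>lborel) = ennreal \<bar>1 / x\<bar> * (\<integral>\<^sup>+v. f (0 + 1 / x * v) \<partial>lborel)"
    using x by (intro nn_integral_real_affine) (auto simp: f_def)
  also have "\<dots> = ennreal (1 / x) * (ennreal (x * x powr (1 + lam)) * ennreal (Gamma (1 - lam) / lam))"
    using x nn_integral_one_minus_exp_div_powr[OF lam] unfolding substitute
    by (subst nn_integral_cmult) auto
  also have "\<dots> = ennreal (x powr (1 + lam)) * ennreal (Gamma (1 - lam) / lam)"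
    using x by (simp add: ennreal_mult'[symmetric] mult.assoc[symmetric])
  finally show ?thesis
    unfolding f_def .
qed simp

lemma abs_exp_minus_mult_diff_le:
  fixes a b x :: real
  assumes "0 \<le> a" "0 \<le> b" "0 \<le> x"
  shows "\<bar>exp (- a * x) - exp (- b * x)\<bar> \<le> \<bar>a - b\<bar> * x"
proof -
  have diff_le: "exp (- c * x) - exp (- d * x) \<le> (d - c) * x" if "0 \<le> c" "c \<le> d" for c d
  proof -
    have "exp (- c * x) - exp (- d * x) = exp (- c * x) * (1 - exp (- ((d - c) * x)))"
      by (simp add: algebra_simps flip: exp_add)
    also have "\<dots> \<le> 1 * ((d - c) * x)"
      using that assms exp_ge_add_one_self[of "- ((d - c) * x)"]
      by (intro mult_mono) auto
    finally show ?thesis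
      by simp
  qed
  have antimono: "exp (- d * x) \<le> exp (- c * x)" if "c \<le> d" for c d
    using that assms by (simp add: mult_right_mono)
  show ?thesis
  proof (cases "a \<le> b")
    case True
    with diff_le[of a b] antimono[of a b] assms show ?thesis
      by (simp add: abs_if)
  next
    case False
    with diff_le[of b a] antimono[of b a] assms show ?thesis
      by (simp add: abs_if)
  qed
qed

lemma le_one_plus_powr:
  fixes x a :: real
  assumes "0 \<le> x" "0 < a"
  shows "x \<le> 1 + x powr (1 + a)"
proof (cases "x \<le> 1")
  case False
  then have "x powr 1 \<le> x powr (1 + a)"
    using assms by (intro powr_mono) auto
  with False show ?thesis
    by simp
qed (smt (verit) powr_ge_zero)

lemma (in real_distribution) AE_nonneg_if_cdf_neg_eq_0:
  assumes "\<forall>x<0. cdf M x = 0"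
  shows "AE x in M. 0 \<le> x"
proof -
  have "eventually (\<lambda>x. cdf M x = 0) (at_left 0)"
    using assms by (intro eventually_mono[OF eventually_at_left_real[of "-1" 0]]) auto
  then have "((\<lambda>_. 0) \<longlongrightarrow> measure M {..<0}) (at_left (0 :: real))"
    using cdf_at_left[of 0] by (rule Lim_transform_eventually[rotated])
  then have "measure M {..<0} = 0"
    by (simp add: tendsto_const_iff)
  then have "AE x in M. x \<notin> {..<0}"
    by (intro AE_not_in null_setsI) (auto simp: emeasure_eq_measure)
  then show ?thesis
    by (auto elim: eventually_mono)
qed

definition frac_deriv_integrand :: "(real \<Rightarrow> real) \<Rightarrow> real \<Rightarrow> real \<Rightarrow> real \<Rightarrow> real" where
  "frac_deriv_integrand \<phi> d lam u = indicator {0<..} u * ((deriv \<phi> u - d) / u powr (1 + lam))"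

locale nonneg_real_distribution = real_distribution +
  assumes AE_nonneg: "AE x in M. 0 \<le> x"
begin

lemma integrable_exp_minus_mult:
  assumes "0 \<le> t"
  shows "integrable M (\<lambda>x. exp (- t * x))"
proof (rule integrable_const_bound[where B = 1])
  show "AE x in M. norm (exp (- t * x)) \<le> 1"
    using AE_nonneg by eventually_elim (use assms in \<open>auto simp: mult_nonneg_nonneg\<close>)
qed measurable

lemma laplace_tr_0 [simp]: "laplace_tr M 0 = 1"
  using prob_space by (simp add: laplace_tr_def)

lemma laplace_tr_has_real_derivative:
  assumes mean: "integrable M (\<lambda>x. x)" and "0 \<le> t"
  shows "(laplace_tr M has_real_derivative - (\<integral>x. x * exp (- t * x) \<partial>M)) (at t within {0..})"
  unfolding has_field_derivative_iff tendsto_at_iff_sequentially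
proof (intro allI impI)
  fix X :: "nat \<Rightarrow> real"
  assume X: "\<forall>n. X n \<in> {0..} - {t}" and "X \<longlonglongrightarrow> t"
  define q where "q n x = (exp (- X n * x) - exp (- t * x)) / (X n - t)" for n x
  have "(\<lambda>n. \<integral>x. q n x \<partial>M) \<longlonglongrightarrow> (\<integral>x. - (x * exp (- t * x)) \<partial>M)"
  proof (rule integral_dominated_convergence[where w = "\<lambda>x. x"])
    show "AE x in M. (\<lambda>n. q n x) \<longlonglongrightarrow> - (x * exp (- t * x))"
    proof (rule AE_I2)
      fix x :: real
      have "((\<lambda>s. exp (- s * x)) has_real_derivative - (x * exp (- t * x))) (at t)"
        by (auto intro!: derivative_eq_intros)
      then show "(\<lambda>n. q n x) \<longlonglongrightarrow> - (x * exp (- t * x))"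
        using X \<open>X \<longlonglongrightarrow> t\<close>
        unfolding has_field_derivative_iff tendsto_at_iff_sequentially q_def comp_def by auto
    qed
    show "AE x in M. norm (q n x) \<le> x" for n
      using AE_nonneg
    proof eventually_elim
      case (elim x)
      have "0 \<le> X n" "X n \<noteq> t"
        using X by auto
      with abs_exp_minus_mult_diff_le[OF \<open>0 \<le> X n\<close> \<open>0 \<le> t\<close> elim] show ?case
        by (simp add: q_def abs_divide field_simps)
    qed
    show "q n \<in> borel_measurable M" for n
      unfolding q_def by measurable
    show "(\<lambda>x. - (x * exp (- t * x))) \<in> borel_measurable M"
      by measurable
  qed (fact mean)
  moreover have "(laplace_tr M (X n) - laplace_tr M t) / (X n - t) = (\<integral>x. q n x \<partial>M)" for n
    using X integrable_exp_minus_mult[of "X n"] integrable_exp_minus_mult[OF \<open>0 \<le> t\<close>]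
    unfolding q_def laplace_tr_def by (simp add: integral_diff)
  ultimately show "((\<lambda>y. (laplace_tr M y - laplace_tr M t) / (y - t)) \<circ> X) \<longlonglongrightarrow> - (\<integral>x. x * exp (- t * x) \<partial>M)"
    by (simp add: comp_def)
qed

lemma deriv_laplace_tr:
  assumes "integrable M (\<lambda>x. x)" and "0 < t"
  shows "deriv (laplace_tr M) t = - (\<integral>x. x * exp (- t * x) \<partial>M)"
proof (rule DERIV_imp_deriv)
  have "at t within {0..} = at t"
    using \<open>0 < t\<close> by (intro at_within_interior) (simp add: interior_real_atLeast)
  with laplace_tr_has_real_derivative[OF assms(1) less_imp_le[OF \<open>0 < t\<close>]]
  show "(laplace_tr M has_real_derivative - (\<integral>x. x * exp (- t * x) \<partial>M)) (at t)"
    by simp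
qed

text \<open>Fatou's lemma applied to the difference quotients \<open>(1 - exp (-h x)) / h \<longrightarrow> x\<close> as \<open>h \<rightarrow> 0+\<close>.\<close>

lemma integrable_if_laplace_tr_right_deriv:
  assumes "(laplace_tr M has_real_derivative d) (at_right 0)"
  shows "integrable M (\<lambda>x. x)"
proof -
  define h where "h n = inverse (real (Suc n))" for n
  have h_pos: "0 < h n" for n
    by (simp add: h_def)
  have h_lim: "filterlim h (at_right 0) sequentially"
    using h_pos LIMSEQ_inverse_real_of_nat unfolding h_def
    by (intro tendsto_imp_filterlim_at_right) auto
  define r where "r n x = (1 - exp (- h n * x)) / h n" for n x
  have r_nonneg: "AE x in M. 0 \<le> r n x" for n
    using AE_nonneg by eventually_elim (use h_pos[of n] in \<open>simp add: r_def mult_nonneg_nonneg\<close>)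
  have r_nn_integral: "(\<integral>\<^sup>+x. r n x \<partial>M) = ennreal ((1 - laplace_tr M (h n)) / h n)" for n
  proof -
    have "integrable M (r n)"
      unfolding r_def using integrable_exp_minus_mult[OF less_imp_le[OF h_pos]]
      by (intro integrable_divide integrable_diff) auto
    moreover have "(\<integral>x. r n x \<partial>M) = (1 - laplace_tr M (h n)) / h n"
      using integrable_exp_minus_mult[OF less_imp_le[OF h_pos]] prob_space
      unfolding r_def laplace_tr_def by (simp add: integral_diff diff_divide_distrib)
    ultimately show ?thesis
      using r_nonneg[of n]
      by (simp add: nn_integral_eq_integral)
  qed
  have "(\<lambda>n. (laplace_tr M (h n) - laplace_tr M 0) / (h n - 0)) \<longlonglongrightarrow> d"
    using filterlim_compose[OF assms[unfolded has_field_derivative_iff] h_lim] .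
  from tendsto_minus[OF this] have "(\<lambda>n. (1 - laplace_tr M (h n)) / h n) \<longlonglongrightarrow> - d"
    by (simp add: minus_divide_left)
  then have r_nn_integral_lim: "(\<lambda>n. \<integral>\<^sup>+x. r n x \<partial>M) \<longlonglongrightarrow> ennreal (- d)"
    unfolding r_nn_integral by (rule tendsto_ennrealI)
  have r_lim: "(\<lambda>n. r n x) \<longlonglongrightarrow> x" for x
  proof -
    have "((\<lambda>s. exp (- s * x)) has_real_derivative - (x * exp (- 0 * x))) (at_right 0)"
      by (auto intro!: derivative_eq_intros)
    from filterlim_compose[OF this[unfolded has_field_derivative_iff] h_lim]
    have "(\<lambda>n. (exp (- h n * x) - 1) / h n) \<longlonglongrightarrow> - x"
      by simp
    from tendsto_minus[OF this] show ?thesis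
      by (simp add: r_def minus_divide_left)
  qed
  have "(\<integral>\<^sup>+x. ennreal x \<partial>M) = (\<integral>\<^sup>+x. liminf (\<lambda>n. ennreal (r n x)) \<partial>M)"
  proof (rule nn_integral_cong)
    show "ennreal x = liminf (\<lambda>n. ennreal (r n x))" for x
      using lim_imp_Liminf[OF _ tendsto_ennrealI[OF r_lim]] by simp
  qed
  also have "\<dots> \<le> liminf (\<lambda>n. \<integral>\<^sup>+x. r n x \<partial>M)"
    by (rule nn_integral_liminf) (simp add: r_def)
  also have "\<dots> = ennreal (- d)"
    using r_nn_integral_lim by (simp add: lim_imp_Liminf)
  finally have "(\<integral>\<^sup>+x. ennreal x \<partial>M) < \<infinity>"
    by (rule le_less_trans) simp
  moreover have "(\<integral>\<^sup>+x. ennreal (norm x) \<partial>M) = (\<integral>\<^sup>+x. ennreal x \<partial>M)"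
    using AE_nonneg by (intro nn_integral_cong_AE) auto
  ultimately show ?thesis
    by (simp add: integrable_iff_bounded)
qed

lemma laplace_tr_right_deriv_iff:
  "(laplace_tr M has_real_derivative d) (at_right 0) \<longleftrightarrow> integrable M (\<lambda>x. x) \<and> d = - (\<integral>x. x \<partial>M)"
proof -
  have mean_deriv: "(laplace_tr M has_real_derivative - (\<integral>x. x \<partial>M)) (at_right 0)"
    if "integrable M (\<lambda>x. x)"
  proof -
    have "(laplace_tr M has_real_derivative - (\<integral>x. x * exp (- 0 * x) \<partial>M)) (at 0 within {0..})"
      using laplace_tr_has_real_derivative[OF that order.refl] .
    then have "(laplace_tr M has_real_derivative - (\<integral>x. x * exp (- 0 * x) \<partial>M)) (at 0 within {0<..})"
      by (rule DERIV_subset) auto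
    then show ?thesis
      by simp
  qed
  show ?thesis
  proof
    assume deriv: "(laplace_tr M has_real_derivative d) (at_right 0)"
    then have mean: "integrable M (\<lambda>x. x)"
      by (rule integrable_if_laplace_tr_right_deriv)
    from deriv mean_deriv[OF mean] have "d = - (\<integral>x. x \<partial>M)"
      unfolding has_field_derivative_iff by (rule tendsto_unique[OF trivial_limit_at_right_real])
    with mean show "integrable M (\<lambda>x. x) \<and> d = - (\<integral>x. x \<partial>M)"
      by simp
  qed (use mean_deriv in auto)
qed

lemma deriv_laplace_tr_plus_mean:
  assumes mean: "integrable M (\<lambda>x. x)" and "0 < u"
  shows "deriv (laplace_tr M) u + (\<integral>x. x \<partial>M) = (\<integral>x. x * (1 - exp (- u * x)) \<partial>M)"
proof -
  have "integrable M (\<lambda>x. x * exp (- u * x))"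
  proof (rule Bochner_Integration.integrable_bound[OF mean])
    show "AE x in M. norm (x * exp (- u * x)) \<le> norm x"
      using AE_nonneg by eventually_elim (use \<open>0 < u\<close> in \<open>simp add: mult_left_le mult_nonneg_nonneg\<close>)
  qed measurable
  with mean show ?thesis
    using deriv_laplace_tr[OF assms] by (simp add: right_diff_distrib integral_diff)
qed

lemma frac_deriv_integrand_laplace_tr:
  assumes "integrable M (\<lambda>x. x)"
  shows "0 \<le> frac_deriv_integrand (laplace_tr M) (- (\<integral>x. x \<partial>M)) lam u"
    and "ennreal (frac_deriv_integrand (laplace_tr M) (- (\<integral>x. x \<partial>M)) lam u)
           = (\<integral>\<^sup>+x. ennreal (indicator {0<..} u * (x * (1 - exp (- u * x)) / u powr (1 + lam))) \<partial>M)"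
proof -
  have "0 \<le> frac_deriv_integrand (laplace_tr M) (- (\<integral>x. x \<partial>M)) lam u \<and>
      ennreal (frac_deriv_integrand (laplace_tr M) (- (\<integral>x. x \<partial>M)) lam u)
           = (\<integral>\<^sup>+x. ennreal (indicator {0<..} u * (x * (1 - exp (- u * x)) / u powr (1 + lam))) \<partial>M)"
  proof (cases "0 < u")
    case True
    define g where "g x = x * (1 - exp (- u * x)) / u powr (1 + lam)" for x
    have g_nonneg: "AE x in M. 0 \<le> g x"
      using AE_nonneg by eventually_elim (use True in \<open>simp add: g_def mult_nonneg_nonneg\<close>)
    have "integrable M (\<lambda>x. x * (1 - exp (- u * x)))"
    proof (rule Bochner_Integration.integrable_bound[OF assms])
      show "AE x in M. norm (x * (1 - exp (- u * x))) \<le> norm x"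
        using AE_nonneg by eventually_elim (use True in \<open>simp add: mult_left_le mult_nonneg_nonneg\<close>)
    qed measurable
    then have "integrable M g"
      unfolding g_def by (rule integrable_divide)
    moreover have "frac_deriv_integrand (laplace_tr M) (- (\<integral>x. x \<partial>M)) lam u = (\<integral>x. g x \<partial>M)"
      using deriv_laplace_tr_plus_mean[OF assms True] True by (simp add: frac_deriv_integrand_def g_def)
    moreover have "(\<integral>\<^sup>+x. ennreal (indicator {0<..} u * (x * (1 - exp (- u * x)) / u powr (1 + lam))) \<partial>M)
        = (\<integral>\<^sup>+x. ennreal (g x) \<partial>M)"
      using True by (simp add: g_def)
    ultimately show ?thesis
      using g_nonneg by (simp add: integral_nonneg_AE nn_integral_eq_integral)
  qed (simp add: frac_deriv_integrand_def)
  then show "0 \<le> frac_deriv_integrand (laplace_tr M) (- (\<integral>x. x \<partial>M)) lam u"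
    and "ennreal (frac_deriv_integrand (laplace_tr M) (- (\<integral>x. x \<partial>M)) lam u)
           = (\<integral>\<^sup>+x. ennreal (indicator {0<..} u * (x * (1 - exp (- u * x)) / u powr (1 + lam))) \<partial>M)"
    by auto
qed

lemma borel_measurable_frac_deriv_integrand:
  assumes "integrable M (\<lambda>x. x)"
  shows "frac_deriv_integrand (laplace_tr M) (- (\<integral>x. x \<partial>M)) lam \<in> borel_measurable lborel"
proof -
  have "(\<lambda>(u, x). ennreal (indicator {0<..} u * (x * (1 - exp (- u * x)) / u powr (1 + lam))))
      \<in> borel_measurable (lborel \<Otimes>\<^sub>M M)"
    by measurable
  then have "(\<lambda>u. enn2real (\<integral>\<^sup>+x. ennreal (indicator {0<..} u * (x * (1 - exp (- u * x)) / u powr (1 + lam))) \<partial>M))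
      \<in> borel_measurable lborel"
    by measurable
  also have "(\<lambda>u. enn2real (\<integral>\<^sup>+x. ennreal (indicator {0<..} u * (x * (1 - exp (- u * x)) / u powr (1 + lam))) \<partial>M))
      = frac_deriv_integrand (laplace_tr M) (- (\<integral>x. x \<partial>M)) lam"
  proof
    fix u
    show "enn2real (\<integral>\<^sup>+x. ennreal (indicator {0<..} u * (x * (1 - exp (- u * x)) / u powr (1 + lam))) \<partial>M)
        = frac_deriv_integrand (laplace_tr M) (- (\<integral>x. x \<partial>M)) lam u"
      using frac_deriv_integrand_laplace_tr[OF assms, of lam u] by (metis enn2real_ennreal)
  qed
  finally show ?thesis .
qed

lemma nn_integral_frac_deriv_integrand:
  assumes "integrable M (\<lambda>x. x)" and lam: "0 < lam" "lam < 1"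
  shows "(\<integral>\<^sup>+u. frac_deriv_integrand (laplace_tr M) (- (\<integral>x. x \<partial>M)) lam u \<partial>lborel)
          = (\<integral>\<^sup>+x. x powr (1 + lam) \<partial>M) * ennreal (Gamma (1 - lam) / lam)"
proof -
  interpret pair_sigma_finite lborel M
    by unfold_locales
  define f where "f u x = ennreal (indicator {0<..} u * (x * (1 - exp (- u * x)) / u powr (1 + lam)))"
    for u x :: real
  have "case_prod f \<in> borel_measurable (lborel \<Otimes>\<^sub>M M)"
    unfolding f_def by measurable
  have "(\<integral>\<^sup>+u. frac_deriv_integrand (laplace_tr M) (- (\<integral>x. x \<partial>M)) lam u \<partial>lborel)
      = (\<integral>\<^sup>+u. \<integral>\<^sup>+x. f u x \<partial>M \<partial>lborel)"
    unfolding f_def by (intro nn_integral_cong frac_deriv_integrand_laplace_tr(2)[OF assms(1)])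
  also have "\<dots> = (\<integral>\<^sup>+x. \<integral>\<^sup>+u. f u x \<partial>lborel \<partial>M)"
    using Fubini'[OF \<open>case_prod f \<in> _\<close>] by simp
  also have "\<dots> = (\<integral>\<^sup>+x. ennreal (x powr (1 + lam)) * ennreal (Gamma (1 - lam) / lam) \<partial>M)"
    using AE_nonneg
    by (intro nn_integral_cong_AE)
       (erule eventually_mono, unfold f_def, rule nn_integral_scaled_one_minus_exp_div_powr[OF lam])
  also have "\<dots> = (\<integral>\<^sup>+x. x powr (1 + lam) \<partial>M) * ennreal (Gamma (1 - lam) / lam)"
    by (rule nn_integral_multc) measurable
  finally show ?thesis .
qed

lemma integrable_if_nn_integral_powr_finite:
  assumes "(\<integral>\<^sup>+x. x powr (1 + lam) \<partial>M) < \<infinity>" and "0 < lam"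
  shows "integrable M (\<lambda>x. x)"
proof -
  have "ennreal x \<le> 1 + ennreal (x powr (1 + lam))" if "0 \<le> x" for x
  proof -
    have "ennreal x \<le> ennreal (1 + x powr (1 + lam))"
      using that \<open>0 < lam\<close> by (intro ennreal_leI le_one_plus_powr)
    then show ?thesis
      by (simp add: ennreal_plus)
  qed
  then have "(\<integral>\<^sup>+x. ennreal (norm x) \<partial>M) \<le> (\<integral>\<^sup>+x. 1 + ennreal (x powr (1 + lam)) \<partial>M)"
    using AE_nonneg by (intro nn_integral_mono_AE) (auto elim!: eventually_mono)
  also have "\<dots> = 1 + (\<integral>\<^sup>+x. x powr (1 + lam) \<partial>M)"
    using emeasure_space_1 by (subst nn_integral_add) auto
  also have "\<dots> < \<infinity>"
    using assms(1) by (simp add: ennreal_add_less_top)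
  finally show ?thesis
    by (simp add: integrable_iff_bounded)
qed

lemma set_integrable_frac_deriv_iff:
  assumes deriv: "(laplace_tr M has_real_derivative d) (at_right 0)" and lam: "0 < lam" "lam < 1"
  shows "set_integrable lborel {0<..} (\<lambda>u. (deriv (laplace_tr M) u - d) / u powr (1 + lam))
           \<longleftrightarrow> (\<integral>\<^sup>+x. x powr (1 + lam) \<partial>M) < \<infinity>"
proof -
  from deriv have mean: "integrable M (\<lambda>x. x)" and d: "d = - (\<integral>x. x \<partial>M)"
    by (simp_all add: laplace_tr_right_deriv_iff)
  have "0 < Gamma (1 - lam) / lam"
    using lam by (simp add: Gamma_real_pos)
  have "set_integrable lborel {0<..} (\<lambda>u. (deriv (laplace_tr M) u - d) / u powr (1 + lam))
      \<longleftrightarrow> integrable lborel (frac_deriv_integrand (laplace_tr M) d lam)"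
    unfolding set_integrable_def by (simp add: frac_deriv_integrand_def[abs_def])
  also have "\<dots> \<longleftrightarrow> (\<integral>\<^sup>+u. frac_deriv_integrand (laplace_tr M) d lam u \<partial>lborel) < \<infinity>"
    unfolding d integrable_iff_bounded
    using borel_measurable_frac_deriv_integrand[OF mean] frac_deriv_integrand_laplace_tr(1)[OF mean]
    by simp
  also have "\<dots> \<longleftrightarrow> (\<integral>\<^sup>+x. x powr (1 + lam) \<partial>M) < \<infinity>"
    unfolding d nn_integral_frac_deriv_integrand[OF mean lam]
    using \<open>0 < Gamma (1 - lam) / lam\<close> by (auto simp: ennreal_mult_less_top)
  finally show ?thesis .
qed

lemma set_integral_frac_deriv:
  assumes deriv: "(laplace_tr M has_real_derivative d) (at_right 0)" and lam: "0 < lam" "lam < 1"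
    and moment: "(\<integral>\<^sup>+x. x powr (1 + lam) \<partial>M) < \<infinity>"
  shows "(LBINT u:{0<..}. (deriv (laplace_tr M) u - d) / u powr (1 + lam))
           = Gamma (1 - lam) / lam * (\<integral>x. x powr (1 + lam) \<partial>M)"
proof -
  from deriv have mean: "integrable M (\<lambda>x. x)" and d: "d = - (\<integral>x. x \<partial>M)"
    by (simp_all add: laplace_tr_right_deriv_iff)
  have "(LBINT u:{0<..}. (deriv (laplace_tr M) u - d) / u powr (1 + lam))
      = (\<integral>u. frac_deriv_integrand (laplace_tr M) d lam u \<partial>lborel)"
    unfolding set_lebesgue_integral_def by (simp add: frac_deriv_integrand_def[abs_def])
  also have "\<dots> = enn2real (\<integral>\<^sup>+u. frac_deriv_integrand (laplace_tr M) d lam u \<partial>lborel)"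
    unfolding d using borel_measurable_frac_deriv_integrand[OF mean] frac_deriv_integrand_laplace_tr(1)[OF mean]
    by (intro integral_eq_nn_integral) auto
  also have "\<dots> = enn2real (\<integral>\<^sup>+x. x powr (1 + lam) \<partial>M) * (Gamma (1 - lam) / lam)"
    unfolding d nn_integral_frac_deriv_integrand[OF mean lam]
    using lam by (simp add: enn2real_mult Gamma_real_pos)
  also have "enn2real (\<integral>\<^sup>+x. x powr (1 + lam) \<partial>M) = (\<integral>x. x powr (1 + lam) \<partial>M)"
    by (intro integral_eq_nn_integral[symmetric]) auto
  finally show ?thesis
    by simp
qed

end

theorem lemma1p1:
  fixes M :: "real measure" and F :: "real \<Rightarrow> real" and lam :: real
  assumes "real_distribution M"
    and "F = cdf M"
    and "\<forall>x<0. F x = 0"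
    and "0 < lam" and "lam < 1"
  shows "(((\<integral>\<^sup>+ x. ennreal (x powr (1 + lam)) \<partial>M) < \<infinity>) \<longleftrightarrow>
           (\<exists>d. (laplace_tr M has_real_derivative d) (at_right 0) \<and>
                set_integrable lborel {0<..}
                  (\<lambda>u. (deriv (laplace_tr M) u - d) / u powr (1 + lam)))) \<and>
         (\<forall>d. (\<integral>\<^sup>+ x. ennreal (x powr (1 + lam)) \<partial>M) < \<infinity> \<longrightarrow>
           (laplace_tr M has_real_derivative d) (at_right 0) \<longrightarrow>
           (\<integral>x. x powr (1 + lam) \<partial>M) =
             lam / Gamma (1 - lam) *
               (LBINT u:{0<..}. (deriv (laplace_tr M) u - d) / u powr (1 + lam)))"
proof -
  have "AE x in M. 0 \<le> x"
    using real_distribution.AE_nonneg_if_cdf_neg_eq_0[OF assms(1)] assms(2,3) by simp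
  with assms(1) interpret nonneg_real_distribution M
    by (simp add: nonneg_real_distribution_def nonneg_real_distribution_axioms_def)
  have right_deriv: "(laplace_tr M has_real_derivative - (\<integral>x. x \<partial>M)) (at_right 0)"
    if "(\<integral>\<^sup>+x. x powr (1 + lam) \<partial>M) < \<infinity>"
    using integrable_if_nn_integral_powr_finite[OF that \<open>0 < lam\<close>] laplace_tr_right_deriv_iff by simp
  have "Gamma (1 - lam) > 0"
    using \<open>lam < 1\<close> by (intro Gamma_real_pos) simp
  then show ?thesis
    using set_integrable_frac_deriv_iff[OF _ \<open>0 < lam\<close> \<open>lam < 1\<close>]
      set_integral_frac_deriv[OF _ \<open>0 < lam\<close> \<open>lam < 1\<close>] right_deriv \<open>0 < lam\<close>
    by auto
qed

end
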